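(* Let $\mu,\psi,x>0$. If $$x>\frac{1}{2\sqrt2}-\frac{1+\sqrt2}{2\sqrt2}\,\frac{\log(2\psi\mu^2)}{\psi},$$ then $$e^{-\psi x}<\frac{\mu}{\sqrt{x+\frac12}}.$$ *)

theory Defs
  imports Complex_Main
begin

end

theory Submission
  imports Defs
begin

text \<open>Write \<open>s = 2\<psi>(x + 1/2)\<close>. Squaring and taking logarithms, the claim becomes
  \<open>ln s - 2\<psi>x < ln (2\<psi>\<mu>\<^sup>2)\<close>. Since \<open>ln s \<le> s/e < (\<surd>2 - 1) s\<close>, it suffices that
  \<open>(\<surd>2 - 1) s - 2\<psi>x \<le> ln (2\<psi>\<mu>\<^sup>2)\<close>, and multiplying by \<open>1 + \<surd>2\<close> shows this is
  exactly the hypothesis on \<open>x\<close>.\<close>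

lemma ln_le_divide_exp1:
  fixes s :: real
  assumes "s > 0"
  shows "ln s \<le> s / exp 1"
proof -
  have "ln (s / exp 1) \<le> s / exp 1 - 1"
    using assms by (intro ln_le_minus_one) simp
  then show ?thesis
    using assms by (simp add: ln_div)
qed

lemma ln_less_sqrt2_minus_one_mult:
  fixes s :: real
  assumes "s > 0"
  shows "ln s < (sqrt 2 - 1) * s"
proof -
  have "exp 1 \<ge> (5/2 :: real)"
    using exp_lower_Taylor_quadratic[of 1] by simp
  then have "s / exp 1 \<le> s / (5/2)"
    using assms by (intro divide_left_mono) auto
  also have "\<dots> < (sqrt 2 - 1) * s"
  proof -
    have "sqrt 2 > (7/5 :: real)"
      by (rule real_less_rsqrt) (simp add: power2_eq_square)
    then show ?thesis
      using assms by simp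
  qed
  finally show ?thesis
    using ln_le_divide_exp1[OF assms] by simp
qed

lemma exp_neg_less_divide_sqrt_if_ln:
  fixes \<mu> t a :: real
  assumes "\<mu> > 0" and "a > 0" and "ln a - 2 * t < 2 * ln \<mu>"
  shows "exp (- t) < \<mu> / sqrt a"
proof -
  have "ln (exp (- t) * sqrt a) = - t + ln a / 2"
    using assms(2) by (simp add: ln_mult ln_sqrt)
  also have "\<dots> < ln \<mu>"
    using assms(3) by simp
  finally have "exp (- t) * sqrt a < \<mu>"
    using assms(1,2) by (simp add: ln_less_cancel_iff)
  then show ?thesis
    using assms(2) by (simp add: field_simps)
qed

lemma threshold_bound_imp_ln_bound:
  fixes \<psi> x L :: real
  assumes "\<psi> > 0"
    and "x > 1 / (2 * sqrt 2) - (1 + sqrt 2) / (2 * sqrt 2) * (L / \<psi>)"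
  shows "(sqrt 2 - 1) * (2 * \<psi> * (x + 1/2)) - 2 * \<psi> * x < L"
proof -
  define r where "r = sqrt (2 :: real)"
  have r2: "r * r = 2" and r_pos: "r > 0"
    unfolding r_def by simp_all
  have "2 * r * \<psi> * x > 2 * r * \<psi> * (1 / (2 * r) - (1 + r) / (2 * r) * (L / \<psi>))"
    using assms r_pos unfolding r_def by simp
  also have "2 * r * \<psi> * (1 / (2 * r) - (1 + r) / (2 * r) * (L / \<psi>)) = \<psi> - (1 + r) * L"
    using r_pos assms(1) by (simp add: field_simps)
  finally have "\<psi> - 2 * r * \<psi> * x < (1 + r) * L"
    by simp
  moreover have "(1 + r) * ((r - 1) * (2 * \<psi> * (x + 1/2)) - 2 * \<psi> * x) = \<psi> - 2 * r * \<psi> * x"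
    using r2 by (simp add: algebra_simps)
  ultimately have "(1 + r) * ((r - 1) * (2 * \<psi> * (x + 1/2)) - 2 * \<psi> * x) < (1 + r) * L"
    by simp
  then show ?thesis
    using r_pos unfolding r_def by simp
qed

theorem mainTheorem19:
  fixes \<mu> \<psi> x :: real
  assumes "\<mu> > 0" and "\<psi> > 0" and "x > 0"
    and "x > 1 / (2 * sqrt 2) - (1 + sqrt 2) / (2 * sqrt 2) * (ln (2 * \<psi> * \<mu>^2) / \<psi>)"
  shows "exp (- \<psi> * x) < \<mu> / sqrt (x + 1/2)"
proof -
  define s where "s = 2 * \<psi> * (x + 1/2)"
  have s_pos: "s > 0"
    using assms(2,3) unfolding s_def by simp
  have "ln s - 2 * \<psi> * x < (sqrt 2 - 1) * s - 2 * \<psi> * x"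
    using ln_less_sqrt2_minus_one_mult[OF s_pos] by simp
  also have "\<dots> < ln (2 * \<psi> * \<mu>^2)"
    using threshold_bound_imp_ln_bound[OF assms(2,4)] unfolding s_def .
  finally have "ln (x + 1/2) - 2 * (\<psi> * x) < 2 * ln \<mu>"
    using assms(1-3) unfolding s_def by (simp add: ln_mult ln_realpow)
  then show ?thesis
    using exp_neg_less_divide_sqrt_if_ln[of \<mu> "x + 1/2" "\<psi> * x"] assms(1,3) by simp
qed

end
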